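(* Let $\phi:\mathbb{R}^m\to\mathbb{R}^n$ be a quadratic harmonic morphism. Then its complete lift $\Phi:\mathbb{R}^m\times\mathbb{R}^m\to\mathbb{R}^n$, $\Phi(x,y)=J\phi(x)\,y$ (the Jacobian matrix of $\phi$ at $x$ applied to the column vector $y$), is again a quadratic harmonic morphism.
   Context: A map $\psi:\mathbb{R}^N\to\mathbb{R}^n$ is quadratic if all its components are homogeneous polynomials of degree $2$. A smooth map $\psi:\mathbb{R}^N\to\mathbb{R}^n$ is a harmonic morphism if for every harmonic function $f$ defined on an open set $V\subset\mathbb{R}^n$ with $\psi^{-1}(V)\neq\emptyset$, the function $f\circ\psi$ is harmonic on $\psi^{-1}(V)$; equivalently, $\psi$ is harmonic (each component satisfies $\sum_i\partial^2\psi^k/\partial x_i^2=0$) and horizontally weakly conformal (there is a function $\lambda$ with $\sum_i\frac{\partial\psi^k}{\partial x_i}\frac{\partial\psi^l}{\partial x_i}=\lambda^2\delta_{kl}$ for all $k,l$). *)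

theory Defs
  imports "HOL-Analysis.Analysis"
begin

definition quadratic_map :: "('a::euclidean_space \<Rightarrow> 'b::euclidean_space) \<Rightarrow> bool" where
  "quadratic_map f \<longleftrightarrow>
     (\<forall>k\<in>Basis. \<exists>A :: 'a \<Rightarrow> 'a \<Rightarrow> real.
        \<forall>x. f x \<bullet> k = (\<Sum>i\<in>Basis. \<Sum>j\<in>Basis. A i j * (x \<bullet> i) * (x \<bullet> j)))"

definition pderiv_dir :: "('a::real_normed_vector \<Rightarrow> 'b::real_normed_vector) \<Rightarrow> 'a \<Rightarrow> 'a \<Rightarrow> 'b" where
  "pderiv_dir f v x = frechet_derivative f (at x) v"

definition twice_differentiable :: "('a::euclidean_space \<Rightarrow> 'b::euclidean_space) \<Rightarrow> bool" where
  "twice_differentiable f \<longleftrightarrow>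
     (\<forall>x. f differentiable (at x)) \<and>
     (\<forall>i\<in>Basis. \<forall>x. (pderiv_dir f i) differentiable (at x))"

definition harmonic_map :: "('a::euclidean_space \<Rightarrow> 'b::euclidean_space) \<Rightarrow> bool" where
  "harmonic_map f \<longleftrightarrow>
     (\<forall>k\<in>Basis. \<forall>x.
        (\<Sum>i\<in>Basis. pderiv_dir (pderiv_dir (\<lambda>z. f z \<bullet> k) i) i x) = 0)"

definition horizontally_weakly_conformal :: "('a::euclidean_space \<Rightarrow> 'b::euclidean_space) \<Rightarrow> bool" where
  "horizontally_weakly_conformal f \<longleftrightarrow>
     (\<exists>lam::'a \<Rightarrow> real. \<forall>x. \<forall>k\<in>Basis. \<forall>l\<in>Basis.
        (\<Sum>i\<in>Basis. (pderiv_dir f i x \<bullet> k) * (pderiv_dir f i x \<bullet> l))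
          = (lam x)\<^sup>2 * (if k = l then 1 else 0))"

text \<open>Harmonic morphism, via the (Fuglede--Ishihara) characterization given in the
  context: a (twice differentiable) map that is harmonic and horizontally weakly conformal.\<close>
definition harmonic_morphism :: "('a::euclidean_space \<Rightarrow> 'b::euclidean_space) \<Rightarrow> bool" where
  "harmonic_morphism f \<longleftrightarrow>
     twice_differentiable f \<and> harmonic_map f \<and> horizontally_weakly_conformal f"

end

theory Submission
  imports Defs
begin

text \<open>Write the components of \<open>\<phi>\<close> as quadratic forms \<open>\<phi>\<^sub>k(x) = Q\<^sub>k(x)\<close> with polarizations
  \<open>B\<^sub>k\<close>, so that \<open>J\<phi>(x) y = (B\<^sub>k(x, y))\<^sub>k\<close>. Each component of the lift is then a bilinear
  form in \<open>(x, y)\<close>, hence a quadratic form on the product whose coefficient matrix has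
  zero diagonal; in particular it is harmonic, whether or not \<open>\<phi>\<close> is. The partial
  derivatives of the lift along \<open>(e, 0)\<close> and \<open>(0, e)\<close> are \<open>B\<^sub>k(e, y) = \<partial>\<^sub>e\<phi>\<^sub>k(y)\<close> and
  \<open>B\<^sub>k(x, e) = \<partial>\<^sub>e\<phi>\<^sub>k(x)\<close>, so the conformality sums of the lift at \<open>(x, y)\<close> are those
  of \<open>\<phi>\<close> at \<open>x\<close> plus those at \<open>y\<close>, with dilation \<open>\<lambda>(x)\<^sup>2 + \<lambda>(y)\<^sup>2\<close>.\<close>

definition quad_form :: "('a::euclidean_space \<Rightarrow> 'a \<Rightarrow> real) \<Rightarrow> 'a \<Rightarrow> real" where
  "quad_form A x = (\<Sum>i\<in>Basis. \<Sum>j\<in>Basis. A i j * (x \<bullet> i) * (x \<bullet> j))"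

definition polar_form :: "('a::euclidean_space \<Rightarrow> 'a \<Rightarrow> real) \<Rightarrow> 'a \<Rightarrow> 'a \<Rightarrow> real" where
  "polar_form A x y = (\<Sum>i\<in>Basis. \<Sum>j\<in>Basis. A i j * ((x \<bullet> i) * (y \<bullet> j) + (y \<bullet> i) * (x \<bullet> j)))"

lemma polar_form_commute: "polar_form A x y = polar_form A y x"
  unfolding polar_form_def by (simp add: algebra_simps)

lemma polar_form_zero [simp]: "polar_form A 0 y = 0" "polar_form A x 0 = 0"
  unfolding polar_form_def by simp_all

lemma polar_form_Basis_diag:
  assumes "i \<in> Basis"
  shows "polar_form A i i = 2 * A i i"
  using assms unfolding polar_form_def
  by (simp add: inner_Basis if_distrib[of "\<lambda>t. _ * t"] cong: if_cong)

lemma has_derivative_quad_form: "(quad_form A has_derivative polar_form A x) (at x within s)"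
  unfolding quad_form_def polar_form_def
  by (auto intro!: derivative_eq_intros simp: algebra_simps)

lemma has_derivative_polar_form [derivative_intros]:
  assumes "(f has_derivative f') (at z within s)" "(g has_derivative g') (at z within s)"
  shows "((\<lambda>z. polar_form A (f z) (g z)) has_derivative
           (\<lambda>h. polar_form A (f' h) (g z) + polar_form A (f z) (g' h))) (at z within s)"
  unfolding polar_form_def
  by (auto intro!: derivative_eq_intros assms simp: algebra_simps sum.distrib[symmetric] sum_distrib_left)

lemma sum_Basis_prod:
  fixes f :: "'a::euclidean_space \<times> 'b::euclidean_space \<Rightarrow> 'c::comm_monoid_add"
  shows "sum f Basis = (\<Sum>i\<in>Basis. f (i, 0)) + (\<Sum>i\<in>Basis. f (0, i))"
proof -
  have "inj_on (\<lambda>u. (u::'a, 0::'b)) Basis" "inj_on (\<lambda>u. (0::'a, u::'b)) Basis"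
    by (auto intro!: inj_onI)
  then show ?thesis
    unfolding Basis_prod_def by (subst sum.union_disjoint) (auto simp: sum.reindex)
qed

text \<open>The block matrix with \<open>A + A\<^sup>T\<close> in the upper right corner: the coefficients of
  \<open>polar_form A x y\<close> as a quadratic form in \<open>(x, y)\<close>.\<close>
definition lift_coeffs :: "('a::euclidean_space \<Rightarrow> 'a \<Rightarrow> real) \<Rightarrow> 'a \<times> 'a \<Rightarrow> 'a \<times> 'a \<Rightarrow> real" where
  "lift_coeffs A I J = (if snd I = 0 \<and> fst J = 0 then A (fst I) (snd J) + A (snd J) (fst I) else 0)"

lemma lift_coeffs_Basis_diag: "I \<in> Basis \<Longrightarrow> lift_coeffs A I I = 0"
  by (auto simp: lift_coeffs_def Basis_prod_def)

lemma polar_form_eq_quad_form_lift_coeffs: "polar_form A x y = quad_form (lift_coeffs A) (x, y)"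
proof -
  have "quad_form (lift_coeffs A) (x, y)
      = (\<Sum>i\<in>Basis. \<Sum>j\<in>Basis. (A i j + A j i) * (x \<bullet> i) * (y \<bullet> j))"
    unfolding quad_form_def lift_coeffs_def by (simp add: sum_Basis_prod inner_Pair_0 nonzero_Basis)
  also have "\<dots> = polar_form A x y"
    unfolding polar_form_def
    by (simp add: algebra_simps sum.distrib sum_distrib_left) (subst sum.swap, simp add: algebra_simps)
  finally show ?thesis ..
qed

definition quad_map :: "('b::euclidean_space \<Rightarrow> 'a::euclidean_space \<Rightarrow> 'a \<Rightarrow> real) \<Rightarrow> 'a \<Rightarrow> 'b" where
  "quad_map AA x = (\<Sum>k\<in>Basis. quad_form (AA k) x *\<^sub>R k)"

definition polar_map :: "('b::euclidean_space \<Rightarrow> 'a::euclidean_space \<Rightarrow> 'a \<Rightarrow> real) \<Rightarrow> 'a \<Rightarrow> 'a \<Rightarrow> 'b" where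
  "polar_map AA x y = (\<Sum>k\<in>Basis. polar_form (AA k) x y *\<^sub>R k)"

lemma inner_quad_map [simp]: "k \<in> Basis \<Longrightarrow> quad_map AA x \<bullet> k = quad_form (AA k) x"
  unfolding quad_map_def by simp

lemma inner_polar_map [simp]: "k \<in> Basis \<Longrightarrow> polar_map AA x y \<bullet> k = polar_form (AA k) x y"
  unfolding polar_map_def by simp

lemma quadratic_map_iff_quad_map: "quadratic_map f \<longleftrightarrow> (\<exists>AA. f = quad_map AA)"
proof
  assume "quadratic_map f"
  then have "\<forall>k\<in>Basis. \<exists>A. \<forall>x. f x \<bullet> k = quad_form A x"
    unfolding quadratic_map_def quad_form_def .
  from bchoice[OF this] obtain AA where AA: "\<forall>k\<in>Basis. \<forall>x. f x \<bullet> k = quad_form (AA k) x" ..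
  have "f = quad_map AA"
    by (rule ext, rule euclidean_eqI) (simp add: AA)
  then show "\<exists>AA. f = quad_map AA" by blast
next
  assume "\<exists>AA. f = quad_map AA"
  then obtain AA where f: "f = quad_map AA" ..
  show "quadratic_map f"
    unfolding quadratic_map_def
  proof (intro ballI exI allI)
    show "f x \<bullet> k = (\<Sum>i\<in>Basis. \<Sum>j\<in>Basis. AA k i j * (x \<bullet> i) * (x \<bullet> j))" if "k \<in> Basis" for k x
      using that by (simp add: f quad_form_def)
  qed
qed

lemma has_derivative_polar_map [derivative_intros]:
  assumes "(f has_derivative f') (at z within s)" "(g has_derivative g') (at z within s)"
  shows "((\<lambda>z. polar_map AA (f z) (g z)) has_derivative
           (\<lambda>h. polar_map AA (f' h) (g z) + polar_map AA (f z) (g' h))) (at z within s)"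
proof -
  have "((\<lambda>z. \<Sum>k\<in>Basis. polar_form (AA k) (f z) (g z) *\<^sub>R k) has_derivative
          (\<lambda>h. \<Sum>k\<in>Basis. (polar_form (AA k) (f' h) (g z) + polar_form (AA k) (f z) (g' h)) *\<^sub>R k))
          (at z within s)"
    by (intro has_derivative_sum has_derivative_scaleR_left has_derivative_polar_form assms)
  then show ?thesis
    by (simp add: polar_map_def scaleR_add_left sum.distrib)
qed

lemma polar_map_zero [simp]: "polar_map AA 0 y = 0" "polar_map AA x 0 = 0"
  unfolding polar_map_def by simp_all

lemma has_derivative_quad_map: "(quad_map AA has_derivative polar_map AA x) (at x within s)"
  unfolding quad_map_def polar_map_def
  by (intro has_derivative_sum has_derivative_scaleR_left has_derivative_quad_form)

lemma has_derivative_imp_pderiv_dir: "(f has_derivative f') (at x) \<Longrightarrow> pderiv_dir f v x = f' v"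
  unfolding pderiv_dir_def by (metis frechet_derivative_at)

lemma pderiv_dir_quad_map: "pderiv_dir (quad_map AA) v = (\<lambda>x. polar_map AA x v)"
  by (rule ext) (rule has_derivative_imp_pderiv_dir[OF has_derivative_quad_map])

lemma twice_differentiable_quad_map: "twice_differentiable (quad_map AA)"
  unfolding twice_differentiable_def pderiv_dir_quad_map
proof (intro conjI ballI allI)
  show "quad_map AA differentiable at x" for x
    using has_derivative_quad_map by (rule differentiableI)
  show "(\<lambda>x. polar_map AA x i) differentiable at x" for i x
    using has_derivative_polar_map[OF has_derivative_ident has_derivative_const] by (rule differentiableI)
qed

lemma harmonic_map_quad_map:
  fixes AA :: "'b::euclidean_space \<Rightarrow> 'a::euclidean_space \<Rightarrow> 'a \<Rightarrow> real"
  assumes "\<And>k. k \<in> Basis \<Longrightarrow> (\<Sum>i\<in>Basis. AA k i i) = 0"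
  shows "harmonic_map (quad_map AA)"
  unfolding harmonic_map_def
proof (intro ballI allI)
  fix k :: 'b and x :: 'a
  assume k: "k \<in> Basis"
  have second_deriv: "pderiv_dir (pderiv_dir (quad_form (AA k)) i) i x = polar_form (AA k) i i" for i
  proof -
    have "pderiv_dir (quad_form (AA k)) i = (\<lambda>x. polar_form (AA k) x i)"
      by (rule ext) (rule has_derivative_imp_pderiv_dir[OF has_derivative_quad_form])
    moreover have "((\<lambda>x. polar_form (AA k) x i) has_derivative (\<lambda>h. polar_form (AA k) h i)) (at x)"
      using has_derivative_polar_form[OF has_derivative_ident has_derivative_const] by simp
    ultimately show ?thesis by (simp add: has_derivative_imp_pderiv_dir)
  qed
  have "(\<lambda>z. quad_map AA z \<bullet> k) = quad_form (AA k)"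
    using k by auto
  then have "(\<Sum>i\<in>Basis. pderiv_dir (pderiv_dir (\<lambda>z. quad_map AA z \<bullet> k) i) i x)
      = (\<Sum>i\<in>Basis. 2 * AA k i i)"
    by (simp add: second_deriv polar_form_Basis_diag)
  also have "\<dots> = 0"
    using assms[OF k] by (simp add: sum_distrib_left[symmetric])
  finally show "(\<Sum>i\<in>Basis. pderiv_dir (pderiv_dir (\<lambda>z. quad_map AA z \<bullet> k) i) i x) = 0" .
qed

lemma jacobian_quad_map:
  fixes AA :: "real^'n \<Rightarrow> real^'m \<Rightarrow> real^'m \<Rightarrow> real"
  shows "jacobian (quad_map AA) (at x) *v y = polar_map AA x y"
proof -
  have "quad_map AA differentiable at x"
    using has_derivative_quad_map by (rule differentiableI)
  then have "(quad_map AA has_derivative (\<lambda>h. jacobian (quad_map AA) (at x) *v h)) (at x)"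
    by (rule jacobian_works[THEN iffD1])
  from has_derivative_unique[OF this has_derivative_quad_map] show ?thesis
    by (simp add: fun_eq_iff)
qed

lemma polar_lift_eq_quad_map:
  "(\<lambda>(x, y). polar_map AA x y) = quad_map (\<lambda>k. lift_coeffs (AA k))"
  by (intro ext, rule euclidean_eqI) (auto simp: polar_form_eq_quad_form_lift_coeffs)

lemma pderiv_dir_polar_lift:
  "pderiv_dir (\<lambda>(x, y). polar_map AA x y) (u, v) (x, y) = polar_map AA u y + polar_map AA x v"
proof -
  have "((\<lambda>z. polar_map AA (fst z) (snd z)) has_derivative
          (\<lambda>h. polar_map AA (fst h) y + polar_map AA x (snd h))) (at (x, y))"
    using has_derivative_polar_map[OF has_derivative_fst[OF has_derivative_ident]
                                      has_derivative_snd[OF has_derivative_ident], where z="(x, y)" and s=UNIV]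
    by simp
  then show ?thesis
    unfolding case_prod_unfold by (simp add: has_derivative_imp_pderiv_dir)
qed

lemma horizontally_weakly_conformal_polar_lift:
  fixes AA :: "'b::euclidean_space \<Rightarrow> 'a::euclidean_space \<Rightarrow> 'a \<Rightarrow> real"
  assumes "horizontally_weakly_conformal (quad_map AA)"
  shows "horizontally_weakly_conformal (\<lambda>(x, y). polar_map AA x y)"
proof -
  obtain lam where lam: "\<And>x k l. k \<in> Basis \<Longrightarrow> l \<in> Basis \<Longrightarrow>
      (\<Sum>i\<in>Basis. polar_form (AA k) x i * polar_form (AA l) x i) = (lam x)\<^sup>2 * (if k = l then 1 else 0)"
    using assms unfolding horizontally_weakly_conformal_def pderiv_dir_quad_map by auto
  have sums: "(\<Sum>I\<in>Basis. (pderiv_dir (\<lambda>(x, y). polar_map AA x y) I (x, y) \<bullet> k)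
                         * (pderiv_dir (\<lambda>(x, y). polar_map AA x y) I (x, y) \<bullet> l))
      = ((lam x)\<^sup>2 + (lam y)\<^sup>2) * (if k = l then 1 else 0)"
    if "k \<in> Basis" "l \<in> Basis" for x y :: 'a and k l :: 'b
  proof -
    have "(\<Sum>I\<in>Basis. (pderiv_dir (\<lambda>(x, y). polar_map AA x y) I (x, y) \<bullet> k)
                      * (pderiv_dir (\<lambda>(x, y). polar_map AA x y) I (x, y) \<bullet> l))
        = (\<Sum>i\<in>Basis. polar_form (AA k) y i * polar_form (AA l) y i)
          + (\<Sum>i\<in>Basis. polar_form (AA k) x i * polar_form (AA l) x i)"
      using that by (simp add: sum_Basis_prod pderiv_dir_polar_lift inner_add_left polar_form_commute[of _ _ y])
    also have "\<dots> = ((lam x)\<^sup>2 + (lam y)\<^sup>2) * (if k = l then 1 else 0)"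
      using that by (simp add: lam algebra_simps)
    finally show ?thesis .
  qed
  show ?thesis
    unfolding horizontally_weakly_conformal_def
    by (intro exI[of _ "\<lambda>(x, y). sqrt ((lam x)\<^sup>2 + (lam y)\<^sup>2)"]) (auto simp: sums)
qed

theorem theorem3p3:
  fixes \<phi> :: "real^'m \<Rightarrow> real^'n"
  assumes "quadratic_map \<phi>" and "harmonic_morphism \<phi>"
  shows "quadratic_map (\<lambda>(x, y). jacobian \<phi> (at x) *v y)
       \<and> harmonic_morphism (\<lambda>(x, y). jacobian \<phi> (at x) *v y)"
proof -
  obtain AA where \<phi>: "\<phi> = quad_map AA"
    using assms(1) quadratic_map_iff_quad_map by blast
  have lift: "(\<lambda>(x, y). jacobian \<phi> (at x) *v y) = (\<lambda>(x, y). polar_map AA x y)"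
    by (simp add: \<phi> jacobian_quad_map)
  have "quadratic_map (\<lambda>(x, y). polar_map AA x y)"
    unfolding polar_lift_eq_quad_map quadratic_map_iff_quad_map by blast
  moreover have "twice_differentiable (\<lambda>(x, y). polar_map AA x y)"
    unfolding polar_lift_eq_quad_map by (rule twice_differentiable_quad_map)
  moreover have "harmonic_map (\<lambda>(x, y). polar_map AA x y)"
    unfolding polar_lift_eq_quad_map by (rule harmonic_map_quad_map) (simp add: lift_coeffs_Basis_diag)
  moreover have "horizontally_weakly_conformal (\<lambda>(x, y). polar_map AA x y)"
    using assms(2) horizontally_weakly_conformal_polar_lift
    unfolding harmonic_morphism_def \<phi> by blast
  ultimately show ?thesis
    unfolding lift harmonic_morphism_def by blast
qed

end
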